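(* Let $\mathcal M$ be a stopping finite MDP with sink state $z$, and $\Phi=(F,r)$ a weighted reachability objective with outcome vector $\vec o=(o_1,\dots,o_k)$. Let $\mathcal Q=(\mathrm{obtainset}(o_1),\dots,\mathrm{obtainset}(o_k))$. Then $$\{\mathrm{prospect}(\mathcal M^\sigma,\Phi):\sigma\in\Sigma\}=\{(\vec o,\vec p):\vec p\in\mathcal P^{\mathcal Q}_{\mathcal M}\}.$$
   Context: MDP: $\mathcal M=(S,s_0,A,\delta)$ finite; $\Sigma$ the set of all history-dependent randomized strategies; $\mathbb P^\sigma_{\mathcal M}$ the induced measure on infinite paths from $s_0$. Weighted reachability objective $\Phi=(F,r)$: absorbing targets $F\subseteq S$, $r:F\to\mathbb Q$ with $r(s)\ne0$; $\Phi(\rho)=r$ of the first visited target, $0$ if none. Outcomes $\mathrm{outc}(\Phi)=r(F)\cup\{0\}$ listed increasingly $o_1<\dots<o_k$. $\mathrm{prospect}(\mathcal M^\sigma,\Phi)=(\vec o,\vec p)$ with $p_i=\mathbb P^\sigma_{\mathcal M}[\Phi(\rho)=o_i]$. $\mathcal M$ is stopping with sink $z$ if $z\notin F$ is an absorbing state and $\mathbb P^\sigma_{\mathcal M}[\lozenge(F\cup\{z\})]=1$ for all $\sigma$, where $\lozenge X$ is the set of paths visiting $X$. In a stopping MDP, $\mathrm{obtainset}(o_i)=\{s\in F:r(s)=o_i\}$ for $o_i\ne0$ and $\mathrm{obtainset}(0)=\{z\}$. For a tuple of target sets $\mathcal Q=(F_1,\dots,F_n)$, the achievable set is $\mathcal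 A^{\mathcal Q}_{\mathcal M}=\{(p_1,\dots,p_n):\exists\sigma\in\Sigma\,\forall i.\ p_i\le\mathbb P^\sigma_{\mathcal M}[\lozenge F_i]\}$ and the Pareto frontier is $\mathcal P^{\mathcal Q}_{\mathcal M}=\{\vec u\in\mathcal A^{\mathcal Q}_{\mathcal M}:\neg\exists \vec v\in\mathcal A^{\mathcal Q}_{\mathcal M}.\ \vec u\ne \vec v\wedge \vec u\le \vec v\}$ (componentwise order). *)

theory Defs
  imports "HOL-Probability.Probability_Mass_Function"
begin

definition is_mdp :: "'s set \<Rightarrow> 's \<Rightarrow> ('s \<Rightarrow> 'act set) \<Rightarrow> ('s \<Rightarrow> 'act \<Rightarrow> 's pmf) \<Rightarrow> bool" where
  "is_mdp S s0 A \<delta> \<longleftrightarrow> finite S \<and> s0 \<in> S \<and>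
     (\<forall>s\<in>S. finite (A s) \<and> A s \<noteq> {} \<and> (\<forall>a\<in>A s. set_pmf (\<delta> s a) \<subseteq> S))"

text \<open>Finite path prefixes: a history of (state, action) pairs together with the current state.\<close>

type_synonym ('s,'act) fpath = "('s \<times> 'act) list \<times> 's"

definition is_strategy :: "'s set \<Rightarrow> ('s \<Rightarrow> 'act set) \<Rightarrow> (('s \<times> 'act) list \<Rightarrow> 's \<Rightarrow> 'act pmf) \<Rightarrow> bool" where
  "is_strategy S A \<sigma> \<longleftrightarrow> (\<forall>h. \<forall>s\<in>S. set_pmf (\<sigma> h s) \<subseteq> A s)"

fun path_pmf :: "'s \<Rightarrow> ('s \<Rightarrow> 'act \<Rightarrow> 's pmf) \<Rightarrow> (('s \<times> 'act) list \<Rightarrow> 's \<Rightarrow> 'act pmf) \<Rightarrow> nat \<Rightarrow> ('s,'act) fpath pmf" where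
  "path_pmf s0 \<delta> \<sigma> 0 = return_pmf ([], s0)"
| "path_pmf s0 \<delta> \<sigma> (Suc n) =
     bind_pmf (path_pmf s0 \<delta> \<sigma> n) (\<lambda>(h, s).
       bind_pmf (\<sigma> h s) (\<lambda>a. map_pmf (\<lambda>t. (h @ [(s, a)], t)) (\<delta> s a)))"

definition fp_states :: "('s,'act) fpath \<Rightarrow> 's list" where
  "fp_states \<pi> = map fst (fst \<pi>) @ [snd \<pi>]"

text \<open>Probability of the event \<open>\<lozenge>X\<close> on infinite paths: by continuity of measure it is the limit
  of the probabilities that X is visited within the first n steps (an increasing sequence).\<close>

definition reach_prob :: "'s \<Rightarrow> ('s \<Rightarrow> 'act \<Rightarrow> 's pmf) \<Rightarrow> (('s \<times> 'act) list \<Rightarrow> 's \<Rightarrow> 'act pmf) \<Rightarrow> 's set \<Rightarrow> real" where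
  "reach_prob s0 \<delta> \<sigma> X =
     lim (\<lambda>n. measure_pmf.prob (path_pmf s0 \<delta> \<sigma> n) {\<pi>. \<exists>x\<in>set (fp_states \<pi>). x \<in> X})"

definition wr_value :: "'s set \<Rightarrow> ('s \<Rightarrow> rat) \<Rightarrow> 's list \<Rightarrow> rat" where
  "wr_value F r xs = (case find (\<lambda>x. x \<in> F) xs of None \<Rightarrow> 0 | Some t \<Rightarrow> r t)"

text \<open>\<open>P[\<Phi>(\<rho>) = o]\<close>: limit of the probabilities that the value on the length-n prefix equals o
  (monotone in n: increasing for o \<noteq> 0, decreasing for o = 0, as r(s) \<noteq> 0).\<close>

definition outcome_prob :: "'s \<Rightarrow> ('s \<Rightarrow> 'act \<Rightarrow> 's pmf) \<Rightarrow> (('s \<times> 'act) list \<Rightarrow> 's \<Rightarrow> 'act pmf)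
    \<Rightarrow> 's set \<Rightarrow> ('s \<Rightarrow> rat) \<Rightarrow> rat \<Rightarrow> real" where
  "outcome_prob s0 \<delta> \<sigma> F r ov =
     lim (\<lambda>n. measure_pmf.prob (path_pmf s0 \<delta> \<sigma> n) {\<pi>. wr_value F r (fp_states \<pi>) = ov})"

definition outcomes :: "'s set \<Rightarrow> ('s \<Rightarrow> rat) \<Rightarrow> rat list" where
  "outcomes F r = sorted_list_of_set (r ` F \<union> {0})"

definition prospect :: "'s \<Rightarrow> ('s \<Rightarrow> 'act \<Rightarrow> 's pmf) \<Rightarrow> (('s \<times> 'act) list \<Rightarrow> 's \<Rightarrow> 'act pmf)
    \<Rightarrow> 's set \<Rightarrow> ('s \<Rightarrow> rat) \<Rightarrow> rat list \<times> real list" where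
  "prospect s0 \<delta> \<sigma> F r = (outcomes F r, map (outcome_prob s0 \<delta> \<sigma> F r) (outcomes F r))"

definition stopping :: "'s set \<Rightarrow> 's \<Rightarrow> ('s \<Rightarrow> 'act set) \<Rightarrow> ('s \<Rightarrow> 'act \<Rightarrow> 's pmf) \<Rightarrow> 's set \<Rightarrow> 's \<Rightarrow> bool" where
  "stopping S s0 A \<delta> F z \<longleftrightarrow> z \<in> S \<and> z \<notin> F \<and> (\<forall>a\<in>A z. \<delta> z a = return_pmf z) \<and>
     (\<forall>\<sigma>. is_strategy S A \<sigma> \<longrightarrow> reach_prob s0 \<delta> \<sigma> (F \<union> {z}) = 1)"

definition obtainset :: "'s set \<Rightarrow> ('s \<Rightarrow> rat) \<Rightarrow> 's \<Rightarrow> rat \<Rightarrow> 's set" where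
  "obtainset F r z ov = (if ov = 0 then {z} else {s\<in>F. r s = ov})"

definition achievable :: "'s set \<Rightarrow> 's \<Rightarrow> ('s \<Rightarrow> 'act set) \<Rightarrow> ('s \<Rightarrow> 'act \<Rightarrow> 's pmf) \<Rightarrow> 's set list \<Rightarrow> real list set" where
  "achievable S s0 A \<delta> Q = {p. length p = length Q \<and>
     (\<exists>\<sigma>. is_strategy S A \<sigma> \<and> (\<forall>i<length Q. p ! i \<le> reach_prob s0 \<delta> \<sigma> (Q ! i)))}"

definition vec_le :: "real list \<Rightarrow> real list \<Rightarrow> bool" where
  "vec_le u v \<longleftrightarrow> length u = length v \<and> (\<forall>i<length u. u ! i \<le> v ! i)"

definition pareto :: "'s set \<Rightarrow> 's \<Rightarrow> ('s \<Rightarrow> 'act set) \<Rightarrow> ('s \<Rightarrow> 'act \<Rightarrow> 's pmf) \<Rightarrow> 's set list \<Rightarrow> real list set" where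
  "pareto S s0 A \<delta> Q = {u \<in> achievable S s0 A \<delta> Q.
     \<not> (\<exists>v\<in>achievable S s0 A \<delta> Q. u \<noteq> v \<and> vec_le u v)}"

end

(* Targets and sink are absorbing, so a path prefix has visited an absorbing state x exactly when
   it currently sits in x. Hence the probability of reaching a set of absorbing states is the limit
   of the increasing probabilities of being in that set after n steps, and it is additive over
   disjoint such sets. The value of a prefix is the reward of its current state if that lies in F
   and 0 otherwise, so an outcome o /= 0 has the probability of reaching obtainset(o), while outcome
   0 has probability 1 - P(reach F), which equals P(reach z) because the MDP is stopping.
   The sets obtainset(o_i) partition F together with z, so the reachability vector of every
   strategy sums to 1. Every achievable vector lies componentwise below such a vector, and a vector
   dominated by another of no larger sum equals it; hence the Pareto frontier consists exactly of
   the reachability vectors of strategies, which are the probability parts of the prospects. *)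

theory Submission
  imports Defs
begin

lemma sum_list_mono_vec_le: "vec_le u v \<Longrightarrow> sum_list u \<le> sum_list v"
  unfolding vec_le_def by (auto intro: sum_list_mono2)

lemma vec_le_sum_list_eq:
  assumes le: "vec_le u v" and sum_le: "sum_list v \<le> sum_list u"
  shows "u = v"
proof (rule ccontr)
  assume "u \<noteq> v"
  with le obtain i where "i < length u" "u ! i < v ! i"
    unfolding vec_le_def by (metis nth_equalityI order_le_imp_less_or_eq)
  with le have "(\<Sum>i<length u. u ! i) < (\<Sum>i<length v. v ! i)"
    unfolding vec_le_def by (auto intro!: sum_strict_mono_ex1)
  with sum_le show False
    by (simp add: sum_list_sum_nth atLeast0LessThan)
qed

section \<open>Pareto frontier of reachability vectors\<close>

lemma achievable_iff_vec_le:
  "p \<in> achievable S s0 A \<delta> Q \<longleftrightarrow>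
     (\<exists>\<sigma>. is_strategy S A \<sigma> \<and> vec_le p (map (reach_prob s0 \<delta> \<sigma>) Q))"
  unfolding achievable_def vec_le_def by auto

lemma reach_vector_achievable:
  "is_strategy S A \<sigma> \<Longrightarrow> map (reach_prob s0 \<delta> \<sigma>) Q \<in> achievable S s0 A \<delta> Q"
  unfolding achievable_iff_vec_le vec_le_def by auto

lemma pareto_eq_reach_vectors:
  assumes sum_const: "\<And>\<sigma>. is_strategy S A \<sigma> \<Longrightarrow> sum_list (map (reach_prob s0 \<delta> \<sigma>) Q) = c"
  shows "pareto S s0 A \<delta> Q = {map (reach_prob s0 \<delta> \<sigma>) Q | \<sigma>. is_strategy S A \<sigma>}"
proof (intro set_eqI iffI)
  fix p assume "p \<in> pareto S s0 A \<delta> Q"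
  then have "p \<in> achievable S s0 A \<delta> Q"
    and maximal: "\<And>v. v \<in> achievable S s0 A \<delta> Q \<Longrightarrow> vec_le p v \<Longrightarrow> p = v"
    unfolding pareto_def by auto
  then obtain \<sigma> where \<sigma>: "is_strategy S A \<sigma>" and le: "vec_le p (map (reach_prob s0 \<delta> \<sigma>) Q)"
    unfolding achievable_iff_vec_le by blast
  have "p = map (reach_prob s0 \<delta> \<sigma>) Q"
    using le by (rule maximal[OF reach_vector_achievable[OF \<sigma>]])
  with \<sigma> show "p \<in> {map (reach_prob s0 \<delta> \<sigma>) Q | \<sigma>. is_strategy S A \<sigma>}"
    by blast
next
  fix p assume "p \<in> {map (reach_prob s0 \<delta> \<sigma>) Q | \<sigma>. is_strategy S A \<sigma>}"
  then obtain \<sigma> where \<sigma>: "is_strategy S A \<sigma>" and p: "p = map (reach_prob s0 \<delta> \<sigma>) Q"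
    by blast
  have "p = v" if "v \<in> achievable S s0 A \<delta> Q" and "vec_le p v" for v
  proof -
    from that(1) obtain \<sigma>' where \<sigma>': "is_strategy S A \<sigma>'"
      and "vec_le v (map (reach_prob s0 \<delta> \<sigma>') Q)"
      unfolding achievable_iff_vec_le by blast
    from this(2) have "sum_list v \<le> sum_list (map (reach_prob s0 \<delta> \<sigma>') Q)"
      by (rule sum_list_mono_vec_le)
    also have "\<dots> = sum_list p"
      using sum_const[OF \<sigma>'] sum_const[OF \<sigma>] p by simp
    finally show "p = v"
      using \<open>vec_le p v\<close> vec_le_sum_list_eq by blast
  qed
  moreover have "p \<in> achievable S s0 A \<delta> Q"
    using \<sigma> p by (simp add: reach_vector_achievable)
  ultimately show "p \<in> pareto S s0 A \<delta> Q"
    unfolding pareto_def by auto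
qed

section \<open>Paths through absorbing states\<close>

definition absorbing :: "('s \<Rightarrow> 'act set) \<Rightarrow> ('s \<Rightarrow> 'act \<Rightarrow> 's pmf) \<Rightarrow> 's set \<Rightarrow> bool" where
  "absorbing A \<delta> T \<longleftrightarrow> (\<forall>s\<in>T. \<forall>a\<in>A s. \<delta> s a = return_pmf s)"

definition state_pmf :: "'s \<Rightarrow> ('s \<Rightarrow> 'act \<Rightarrow> 's pmf) \<Rightarrow> (('s \<times> 'act) list \<Rightarrow> 's \<Rightarrow> 'act pmf)
    \<Rightarrow> nat \<Rightarrow> 's pmf" where
  "state_pmf s0 \<delta> \<sigma> n = map_pmf snd (path_pmf s0 \<delta> \<sigma> n)"

lemma set_path_pmf_SucE:
  assumes "\<pi> \<in> set_pmf (path_pmf s0 \<delta> \<sigma> (Suc n))"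
  obtains h s a t where "(h, s) \<in> set_pmf (path_pmf s0 \<delta> \<sigma> n)" "a \<in> set_pmf (\<sigma> h s)"
    "t \<in> set_pmf (\<delta> s a)" "\<pi> = (h @ [(s, a)], t)"
  using assms by (auto simp: split_beta)

lemma fp_states_snoc: "fp_states (h @ [(s, a)], t) = fp_states (h, s) @ [t]"
  by (simp add: fp_states_def)

lemma snd_in_fp_states: "snd \<pi> \<in> set (fp_states \<pi>)"
  by (simp add: fp_states_def)

lemma state_pmf_Suc:
  "state_pmf s0 \<delta> \<sigma> (Suc n) =
     bind_pmf (path_pmf s0 \<delta> \<sigma> n) (\<lambda>\<pi>. bind_pmf (\<sigma> (fst \<pi>) (snd \<pi>)) (\<delta> (snd \<pi>)))"
  by (simp add: state_pmf_def map_bind_pmf split_beta map_pmf_comp)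

locale finite_mdp =
  fixes S :: "'s set" and s0 :: 's and A :: "'s \<Rightarrow> 'act set" and \<delta> :: "'s \<Rightarrow> 'act \<Rightarrow> 's pmf"
  assumes mdp: "is_mdp S s0 A \<delta>"
begin

lemma finite_S: "finite S"
  using mdp by (simp add: is_mdp_def)

lemma path_pmf_state_in_S:
  assumes \<sigma>: "is_strategy S A \<sigma>"
  shows "\<pi> \<in> set_pmf (path_pmf s0 \<delta> \<sigma> n) \<Longrightarrow> snd \<pi> \<in> S"
proof (induction n arbitrary: \<pi>)
  case 0
  then show ?case using mdp by (simp add: is_mdp_def)
next
  case (Suc n)
  from Suc.prems obtain h s a t where hs: "(h, s) \<in> set_pmf (path_pmf s0 \<delta> \<sigma> n)"
    and a: "a \<in> set_pmf (\<sigma> h s)" and t: "t \<in> set_pmf (\<delta> s a)" and \<pi>: "\<pi> = (h @ [(s, a)], t)"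
    by (rule set_path_pmf_SucE)
  have "s \<in> S" using Suc.IH[OF hs] by simp
  moreover have "a \<in> A s" using \<sigma> \<open>s \<in> S\<close> a by (auto simp: is_strategy_def)
  ultimately show ?case using mdp t \<pi> by (auto simp: is_mdp_def)
qed

end

locale absorbing_mdp = finite_mdp +
  fixes T :: "'s set"
  assumes T_subset: "T \<subseteq> S" and T_absorbing: "absorbing A \<delta> T"
begin

lemma step_from_absorbing:
  assumes \<sigma>: "is_strategy S A \<sigma>" and "s \<in> S" "s \<in> T"
  shows "bind_pmf (\<sigma> h s) (\<delta> s) = return_pmf s"
proof -
  have "a \<in> A s" if "a \<in> set_pmf (\<sigma> h s)" for a
    using \<sigma> \<open>s \<in> S\<close> that by (auto simp: is_strategy_def)
  then have "bind_pmf (\<sigma> h s) (\<delta> s) = bind_pmf (\<sigma> h s) (\<lambda>_. return_pmf s)"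
    using T_absorbing \<open>s \<in> T\<close> by (intro bind_pmf_cong) (auto simp: absorbing_def)
  then show ?thesis by (simp add: bind_pmf_const)
qed

lemma visited_absorbing_eq_current:
  assumes \<sigma>: "is_strategy S A \<sigma>"
  shows "\<pi> \<in> set_pmf (path_pmf s0 \<delta> \<sigma> n) \<Longrightarrow> x \<in> set (fp_states \<pi>) \<Longrightarrow> x \<in> T \<Longrightarrow>
    snd \<pi> = x"
proof (induction n arbitrary: \<pi>)
  case 0
  then show ?case by (simp add: fp_states_def)
next
  case (Suc n)
  from Suc.prems(1) obtain h s a t where hs: "(h, s) \<in> set_pmf (path_pmf s0 \<delta> \<sigma> n)"
    and a: "a \<in> set_pmf (\<sigma> h s)" and t: "t \<in> set_pmf (\<delta> s a)" and \<pi>: "\<pi> = (h @ [(s, a)], t)"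
    by (rule set_path_pmf_SucE)
  show ?case
  proof (cases "x = t")
    case False
    with Suc.prems \<pi> have "x \<in> set (fp_states (h, s))"
      by (simp add: fp_states_snoc)
    then have "s = x" using Suc.IH[OF hs] Suc.prems(3) by simp
    have "t \<in> set_pmf (bind_pmf (\<sigma> h s) (\<delta> s))"
      using a t by auto
    then have "t = s"
      using step_from_absorbing[OF \<sigma> path_pmf_state_in_S[OF \<sigma> hs], of h] \<open>s = x\<close> Suc.prems(3)
      by (simp del: set_bind_pmf)
    with \<open>s = x\<close> show ?thesis using \<pi> by simp
  qed (use \<pi> in simp)
qed

lemma pmf_state_pmf_mono:
  assumes \<sigma>: "is_strategy S A \<sigma>" and x: "x \<in> T"
  shows "pmf (state_pmf s0 \<delta> \<sigma> n) x \<le> pmf (state_pmf s0 \<delta> \<sigma> (Suc n)) x"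
proof -
  let ?P = "path_pmf s0 \<delta> \<sigma> n"
  have stay: "pmf (return_pmf (snd \<pi>)) x \<le> pmf (bind_pmf (\<sigma> (fst \<pi>) (snd \<pi>)) (\<delta> (snd \<pi>))) x"
    if "\<pi> \<in> set_pmf ?P" for \<pi>
    using step_from_absorbing[OF \<sigma> path_pmf_state_in_S[OF \<sigma> that] _, of "fst \<pi>"] x
    by (cases "snd \<pi> = x") auto
  have "ennreal (pmf (state_pmf s0 \<delta> \<sigma> n) x) = (\<integral>\<^sup>+\<pi>. pmf (return_pmf (snd \<pi>)) x \<partial>measure_pmf ?P)"
    by (simp add: state_pmf_def map_pmf_def ennreal_pmf_bind)
  also have "\<dots> \<le> (\<integral>\<^sup>+\<pi>. pmf (bind_pmf (\<sigma> (fst \<pi>) (snd \<pi>)) (\<delta> (snd \<pi>))) x \<partial>measure_pmf ?P)"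
    using stay by (intro nn_integral_mono_AE) (simp add: AE_measure_pmf_iff)
  also have "\<dots> = ennreal (pmf (state_pmf s0 \<delta> \<sigma> (Suc n)) x)"
    by (simp add: state_pmf_Suc ennreal_pmf_bind)
  finally show ?thesis by simp
qed

lemma prob_state_pmf_incseq:
  assumes \<sigma>: "is_strategy S A \<sigma>" and X: "X \<subseteq> T"
  shows "incseq (\<lambda>n. measure_pmf.prob (state_pmf s0 \<delta> \<sigma> n) X)"
proof (rule incseq_SucI)
  fix n
  have "finite X" using X T_subset finite_S by (blast intro: finite_subset)
  then show "measure_pmf.prob (state_pmf s0 \<delta> \<sigma> n) X \<le> measure_pmf.prob (state_pmf s0 \<delta> \<sigma> (Suc n)) X"
    using pmf_state_pmf_mono[OF \<sigma>] X by (auto simp: measure_measure_pmf_finite intro!: sum_mono)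
qed

lemma prob_visit_eq_prob_state:
  assumes \<sigma>: "is_strategy S A \<sigma>" and X: "X \<subseteq> T"
  shows "measure_pmf.prob (path_pmf s0 \<delta> \<sigma> n) {\<pi>. \<exists>x\<in>set (fp_states \<pi>). x \<in> X} =
    measure_pmf.prob (state_pmf s0 \<delta> \<sigma> n) X"
proof -
  let ?P = "path_pmf s0 \<delta> \<sigma> n"
  have "{\<pi>. \<exists>x\<in>set (fp_states \<pi>). x \<in> X} \<inter> set_pmf ?P = snd -` X \<inter> set_pmf ?P"
  proof (intro equalityI subsetI)
    fix \<pi> assume "\<pi> \<in> {\<pi>. \<exists>x\<in>set (fp_states \<pi>). x \<in> X} \<inter> set_pmf ?P"
    then obtain x where \<pi>: "\<pi> \<in> set_pmf ?P" and "x \<in> set (fp_states \<pi>)" "x \<in> X" by blast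
    with X have "snd \<pi> = x" by (intro visited_absorbing_eq_current[OF \<sigma> \<pi>]) auto
    with \<pi> \<open>x \<in> X\<close> show "\<pi> \<in> snd -` X \<inter> set_pmf ?P" by simp
  qed (auto intro: snd_in_fp_states)
  then have "measure_pmf.prob ?P {\<pi>. \<exists>x\<in>set (fp_states \<pi>). x \<in> X} = measure_pmf.prob ?P (snd -` X)"
    by (metis (no_types) measure_Int_set_pmf)
  then show ?thesis
    by (simp add: state_pmf_def)
qed

lemma state_prob_tendsto_reach_prob:
  assumes \<sigma>: "is_strategy S A \<sigma>" and X: "X \<subseteq> T"
  shows "(\<lambda>n. measure_pmf.prob (state_pmf s0 \<delta> \<sigma> n) X) \<longlonglongrightarrow> reach_prob s0 \<delta> \<sigma> X"
proof -
  have "bdd_above (range (\<lambda>n. measure_pmf.prob (state_pmf s0 \<delta> \<sigma> n) X))"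
    by (auto intro: bdd_aboveI[of _ 1])
  then have "convergent (\<lambda>n. measure_pmf.prob (state_pmf s0 \<delta> \<sigma> n) X)"
    using LIMSEQ_incseq_SUP[OF _ prob_state_pmf_incseq[OF \<sigma> X]] by (auto simp: convergent_def)
  then show ?thesis
    by (simp add: reach_prob_def prob_visit_eq_prob_state[OF \<sigma> X] convergent_LIMSEQ_iff)
qed

lemma reach_prob_Un:
  assumes \<sigma>: "is_strategy S A \<sigma>" and "X \<subseteq> T" "Y \<subseteq> T" "X \<inter> Y = {}"
  shows "reach_prob s0 \<delta> \<sigma> (X \<union> Y) = reach_prob s0 \<delta> \<sigma> X + reach_prob s0 \<delta> \<sigma> Y"
proof -
  have "(\<lambda>n. measure_pmf.prob (state_pmf s0 \<delta> \<sigma> n) (X \<union> Y)) \<longlonglongrightarrow> reach_prob s0 \<delta> \<sigma> (X \<union> Y)"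
    using assms by (intro state_prob_tendsto_reach_prob) auto
  moreover have "(\<lambda>n. measure_pmf.prob (state_pmf s0 \<delta> \<sigma> n) (X \<union> Y)) \<longlonglongrightarrow>
      reach_prob s0 \<delta> \<sigma> X + reach_prob s0 \<delta> \<sigma> Y"
    using assms
    by (simp add: measure_pmf.finite_measure_Union tendsto_add state_prob_tendsto_reach_prob)
  ultimately show ?thesis
    by (rule LIMSEQ_unique)
qed

lemma reach_prob_UN:
  assumes \<sigma>: "is_strategy S A \<sigma>" and "finite I" "\<And>i. i \<in> I \<Longrightarrow> X i \<subseteq> T"
    and "disjoint_family_on X I"
  shows "reach_prob s0 \<delta> \<sigma> (\<Union>i\<in>I. X i) = (\<Sum>i\<in>I. reach_prob s0 \<delta> \<sigma> (X i))"
proof -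
  have "(\<lambda>n. measure_pmf.prob (state_pmf s0 \<delta> \<sigma> n) (\<Union>i\<in>I. X i)) \<longlonglongrightarrow>
      reach_prob s0 \<delta> \<sigma> (\<Union>i\<in>I. X i)"
    using assms by (intro state_prob_tendsto_reach_prob) auto
  moreover have "(\<lambda>n. measure_pmf.prob (state_pmf s0 \<delta> \<sigma> n) (\<Union>i\<in>I. X i)) \<longlonglongrightarrow>
      (\<Sum>i\<in>I. reach_prob s0 \<delta> \<sigma> (X i))"
    using assms
    by (simp add: measure_pmf.finite_measure_finite_Union tendsto_sum state_prob_tendsto_reach_prob)
  ultimately show ?thesis
    by (rule LIMSEQ_unique)
qed

section \<open>Outcomes of a weighted reachability objective\<close>

lemma wr_value_fp_states:
  assumes \<sigma>: "is_strategy S A \<sigma>" and F: "F \<subseteq> T" and \<pi>: "\<pi> \<in> set_pmf (path_pmf s0 \<delta> \<sigma> n)"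
  shows "wr_value F r (fp_states \<pi>) = (if snd \<pi> \<in> F then r (snd \<pi>) else 0)"
proof (cases "find (\<lambda>x. x \<in> F) (fp_states \<pi>)")
  case None
  then have "snd \<pi> \<notin> F"
    using snd_in_fp_states[of \<pi>] by (auto simp: find_None_iff)
  with None show ?thesis by (simp add: wr_value_def)
next
  case (Some y)
  then have "y \<in> set (fp_states \<pi>)" "y \<in> F"
    by (auto simp: find_Some_iff nth_mem)
  with F have "snd \<pi> = y"
    by (intro visited_absorbing_eq_current[OF \<sigma> \<pi>]) auto
  with Some \<open>y \<in> F\<close> show ?thesis by (simp add: wr_value_def)
qed

lemma prob_wr_value_eq:
  assumes \<sigma>: "is_strategy S A \<sigma>" and F: "F \<subseteq> T"
  shows "measure_pmf.prob (path_pmf s0 \<delta> \<sigma> n) {\<pi>. wr_value F r (fp_states \<pi>) = ov} =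
    measure_pmf.prob (state_pmf s0 \<delta> \<sigma> n) {s. (if s \<in> F then r s else 0) = ov}"
proof -
  let ?P = "path_pmf s0 \<delta> \<sigma> n"
  have "{\<pi>. wr_value F r (fp_states \<pi>) = ov} \<inter> set_pmf ?P =
      snd -` {s. (if s \<in> F then r s else 0) = ov} \<inter> set_pmf ?P"
    using wr_value_fp_states[OF \<sigma> F] by auto
  then have "measure_pmf.prob ?P {\<pi>. wr_value F r (fp_states \<pi>) = ov} =
      measure_pmf.prob ?P (snd -` {s. (if s \<in> F then r s else 0) = ov})"
    by (metis (no_types) measure_Int_set_pmf)
  then show ?thesis
    by (simp add: state_pmf_def)
qed

lemma outcome_prob_nonzero:
  assumes \<sigma>: "is_strategy S A \<sigma>" and F: "F \<subseteq> T" and "ov \<noteq> 0"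
  shows "outcome_prob s0 \<delta> \<sigma> F r ov = reach_prob s0 \<delta> \<sigma> {s\<in>F. r s = ov}"
proof -
  have "{s. (if s \<in> F then r s else 0) = ov} = {s\<in>F. r s = ov}"
    using \<open>ov \<noteq> 0\<close> by auto
  moreover have "(\<lambda>n. measure_pmf.prob (state_pmf s0 \<delta> \<sigma> n) {s\<in>F. r s = ov}) \<longlonglongrightarrow>
      reach_prob s0 \<delta> \<sigma> {s\<in>F. r s = ov}"
    using F by (intro state_prob_tendsto_reach_prob[OF \<sigma>]) auto
  ultimately show ?thesis
    by (simp add: outcome_prob_def prob_wr_value_eq[OF \<sigma> F] limI)
qed

lemma outcome_prob_zero:
  assumes \<sigma>: "is_strategy S A \<sigma>" and F: "F \<subseteq> T" and r_nonzero: "\<forall>s\<in>F. r s \<noteq> 0"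
  shows "outcome_prob s0 \<delta> \<sigma> F r 0 = 1 - reach_prob s0 \<delta> \<sigma> F"
proof -
  have "{s. (if s \<in> F then r s else 0) = 0} = UNIV - F"
    using r_nonzero by auto
  moreover have "measure_pmf.prob M (UNIV - F) = 1 - measure_pmf.prob M F" for M :: "'s pmf"
    using measure_pmf.prob_compl[of F M] by simp
  moreover have "(\<lambda>n. 1 - measure_pmf.prob (state_pmf s0 \<delta> \<sigma> n) F) \<longlonglongrightarrow> 1 - reach_prob s0 \<delta> \<sigma> F"
    by (intro tendsto_diff tendsto_const state_prob_tendsto_reach_prob[OF \<sigma> F])
  ultimately show ?thesis
    by (simp add: outcome_prob_def prob_wr_value_eq[OF \<sigma> F] limI)
qed

lemma outcome_prob_eq_reach_prob_obtainset:
  assumes \<sigma>: "is_strategy S A \<sigma>" and "F \<subseteq> T" "z \<in> T" "z \<notin> F" "\<forall>s\<in>F. r s \<noteq> 0"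
    and stops: "reach_prob s0 \<delta> \<sigma> (F \<union> {z}) = 1"
  shows "outcome_prob s0 \<delta> \<sigma> F r ov = reach_prob s0 \<delta> \<sigma> (obtainset F r z ov)"
proof (cases "ov = 0")
  case True
  \<comment> \<open>outcome 0 means not being in F; stopping turns the missing mass into the mass reaching z\<close>
  have "reach_prob s0 \<delta> \<sigma> (F \<union> {z}) = reach_prob s0 \<delta> \<sigma> F + reach_prob s0 \<delta> \<sigma> {z}"
    using assms by (intro reach_prob_Un) auto
  with True assms show ?thesis
    by (simp add: outcome_prob_zero obtainset_def)
next
  case False
  with assms show ?thesis
    by (simp add: outcome_prob_nonzero obtainset_def)
qed

lemma sum_reach_prob_obtainset:
  assumes \<sigma>: "is_strategy S A \<sigma>" and "F \<subseteq> T" "z \<in> T" "z \<notin> F" "\<forall>s\<in>F. r s \<noteq> 0"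
  shows "(\<Sum>ov\<in>r ` F \<union> {0}. reach_prob s0 \<delta> \<sigma> (obtainset F r z ov)) = reach_prob s0 \<delta> \<sigma> (F \<union> {z})"
proof -
  have "finite F"
    using assms T_subset finite_S by (blast intro: finite_subset)
  then have "(\<Sum>ov\<in>r ` F \<union> {0}. reach_prob s0 \<delta> \<sigma> (obtainset F r z ov)) =
      reach_prob s0 \<delta> \<sigma> (\<Union>ov\<in>r ` F \<union> {0}. obtainset F r z ov)"
    using assms
    by (intro reach_prob_UN[OF \<sigma>, symmetric]) (auto simp: obtainset_def disjoint_family_on_def)
  also have "(\<Union>ov\<in>r ` F \<union> {0}. obtainset F r z ov) = F \<union> {z}"
    using assms by (auto simp: obtainset_def split: if_splits)
  finally show ?thesis .
qed

end

lemma set_outcomes: "finite F \<Longrightarrow> set (outcomes F r) = r ` F \<union> {0}"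
  unfolding outcomes_def by (simp only: finite_Un finite_imageI finite.intros set_sorted_list_of_set)

lemma distinct_outcomes: "distinct (outcomes F r)"
  unfolding outcomes_def by (rule distinct_sorted_list_of_set)

theorem mainTheorem4:
  fixes S :: "'s set" and s0 :: 's and A :: "'s \<Rightarrow> 'act set" and \<delta> :: "'s \<Rightarrow> 'act \<Rightarrow> 's pmf"
    and F :: "'s set" and r :: "'s \<Rightarrow> rat" and z :: 's
  assumes mdp: "is_mdp S s0 A \<delta>"
    and F_sub: "F \<subseteq> S"
    and F_absorbing: "\<forall>s\<in>F. \<forall>a\<in>A s. \<delta> s a = return_pmf s"
    and r_nonzero: "\<forall>s\<in>F. r s \<noteq> 0"
    and stop: "stopping S s0 A \<delta> F z"
  shows "{prospect s0 \<delta> \<sigma> F r | \<sigma>. is_strategy S A \<sigma>} =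
         {(outcomes F r, p) | p. p \<in> pareto S s0 A \<delta> (map (obtainset F r z) (outcomes F r))}"
proof -
  from stop have z: "z \<in> S" "z \<notin> F" "absorbing A \<delta> {z}"
    and stops: "\<And>\<sigma>. is_strategy S A \<sigma> \<Longrightarrow> reach_prob s0 \<delta> \<sigma> (F \<union> {z}) = 1"
    by (auto simp: stopping_def absorbing_def)
  interpret absorbing_mdp S s0 A \<delta> "F \<union> {z}"
    using mdp F_sub F_absorbing z by unfold_locales (auto simp: absorbing_def)
  have "finite F"
    using F_sub finite_S by (rule finite_subset)
  have absorbing_targets: "F \<subseteq> F \<union> {z}" "z \<in> F \<union> {z}"
    by auto
  let ?Q = "map (obtainset F r z) (outcomes F r)"
  have prospect: "prospect s0 \<delta> \<sigma> F r = (outcomes F r, map (reach_prob s0 \<delta> \<sigma>) ?Q)"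
    if \<sigma>: "is_strategy S A \<sigma>" for \<sigma>
    using outcome_prob_eq_reach_prob_obtainset[OF \<sigma> absorbing_targets z(2) r_nonzero stops[OF \<sigma>]]
    by (simp add: prospect_def)
  have "sum_list (map (reach_prob s0 \<delta> \<sigma>) ?Q) = 1" if \<sigma>: "is_strategy S A \<sigma>" for \<sigma>
    using sum_reach_prob_obtainset[OF \<sigma> absorbing_targets z(2) r_nonzero] stops[OF \<sigma>]
    by (simp add: sum_list_distinct_conv_sum_set distinct_outcomes set_outcomes[OF \<open>finite F\<close>])
  then have "pareto S s0 A \<delta> ?Q = {map (reach_prob s0 \<delta> \<sigma>) ?Q | \<sigma>. is_strategy S A \<sigma>}"
    by (rule pareto_eq_reach_vectors)
  then show ?thesis
    using prospect by (auto simp del: map_map) (metis prospect)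
qed

end
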